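(* Let $\mathcal{A}$ be an abelian category. (1) Let $M,N_1,\dots,N_n$ be objects of $\mathcal{A}$. Then $\bigoplus_{i=1}^n N_i$ is strongly $M$-Rickart if and only if $N_i$ is strongly $M$-Rickart for every $i\in\{1,\dots,n\}$. (2) Let $M_1,\dots,M_n,N$ be objects of $\mathcal{A}$. Then $N$ is dual strongly $\bigoplus_{i=1}^n M_i$-Rickart if and only if $N$ is dual strongly $M_i$-Rickart for every $i\in\{1,\dots,n\}$.
   Context: A morphism $f:X\to Y$ is a section if $f'f=1_X$ for some $f'$, a retraction if $ff'=1_Y$ for some $f'$. A monomorphism $k:K\to X$ is fully invariant if for every $h:X\to X$ there is $\alpha:K\to K$ with $hk=k\alpha$; an epimorphism $c:X\to C$ is fully coinvariant if for every $h:X\to X$ there is $\gamma:C\to C$ with $ch=\gamma c$. For objects $M,N$: $N$ is strongly $M$-Rickart if the kernel of every morphism $f:M\to N$ is a fully invariant section; $N$ is dual strongly $M$-Rickart if the cokernel of every morphism $f:M\to N$ is a fully coinvariant retraction. *)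

theory Defs
  imports Main
begin

text \<open>A (locally small, not necessarily small) category given by explicit carriers.
  Comp g f is the composite g after f (defined when Cod f = Dom g).\<close>

record ('o, 'm) cat =
  Obj :: "'o set"
  Arr :: "'m set"
  Dom :: "'m \<Rightarrow> 'o"
  Cod :: "'m \<Rightarrow> 'o"
  Comp :: "'m \<Rightarrow> 'm \<Rightarrow> 'm"
  Id :: "'o \<Rightarrow> 'm"

definition hom :: "('o, 'm) cat \<Rightarrow> 'o \<Rightarrow> 'o \<Rightarrow> 'm set" where
  "hom C a b = {f \<in> Arr C. Dom C f = a \<and> Cod C f = b}"

definition category :: "('o, 'm) cat \<Rightarrow> bool" where
  "category C \<longleftrightarrow>
     (\<forall>f \<in> Arr C. Dom C f \<in> Obj C \<and> Cod C f \<in> Obj C) \<and>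
     (\<forall>a \<in> Obj C. Id C a \<in> hom C a a) \<and>
     (\<forall>a b c f g. f \<in> hom C a b \<longrightarrow> g \<in> hom C b c \<longrightarrow> Comp C g f \<in> hom C a c) \<and>
     (\<forall>a b c d f g h. f \<in> hom C a b \<longrightarrow> g \<in> hom C b c \<longrightarrow> h \<in> hom C c d \<longrightarrow>
        Comp C h (Comp C g f) = Comp C (Comp C h g) f) \<and>
     (\<forall>a b f. f \<in> hom C a b \<longrightarrow> Comp C f (Id C a) = f \<and> Comp C (Id C b) f = f)"

definition mono :: "('o, 'm) cat \<Rightarrow> 'm \<Rightarrow> bool" where
  "mono C f \<longleftrightarrow> f \<in> Arr C \<and>
     (\<forall>x g h. g \<in> hom C x (Dom C f) \<longrightarrow> h \<in> hom C x (Dom C f) \<longrightarrow>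
        Comp C f g = Comp C f h \<longrightarrow> g = h)"

definition epi :: "('o, 'm) cat \<Rightarrow> 'm \<Rightarrow> bool" where
  "epi C f \<longleftrightarrow> f \<in> Arr C \<and>
     (\<forall>x g h. g \<in> hom C (Cod C f) x \<longrightarrow> h \<in> hom C (Cod C f) x \<longrightarrow>
        Comp C g f = Comp C h f \<longrightarrow> g = h)"

definition zero_obj :: "('o, 'm) cat \<Rightarrow> 'o \<Rightarrow> bool" where
  "zero_obj C z \<longleftrightarrow> z \<in> Obj C \<and>
     (\<forall>a \<in> Obj C. (\<exists>!f. f \<in> hom C z a) \<and> (\<exists>!f. f \<in> hom C a z))"

definition zero_mor :: "('o, 'm) cat \<Rightarrow> 'm \<Rightarrow> bool" where
  "zero_mor C f \<longleftrightarrow> f \<in> Arr C \<and>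
     (\<exists>z g h. zero_obj C z \<and> g \<in> hom C (Dom C f) z \<and> h \<in> hom C z (Cod C f) \<and> f = Comp C h g)"

definition is_kernel :: "('o, 'm) cat \<Rightarrow> 'm \<Rightarrow> 'm \<Rightarrow> bool" where
  "is_kernel C f k \<longleftrightarrow> f \<in> Arr C \<and> k \<in> Arr C \<and> Cod C k = Dom C f \<and>
     zero_mor C (Comp C f k) \<and>
     (\<forall>g \<in> Arr C. Cod C g = Dom C f \<longrightarrow> zero_mor C (Comp C f g) \<longrightarrow>
        (\<exists>!u. u \<in> hom C (Dom C g) (Dom C k) \<and> Comp C k u = g))"

definition is_cokernel :: "('o, 'm) cat \<Rightarrow> 'm \<Rightarrow> 'm \<Rightarrow> bool" where
  "is_cokernel C f c \<longleftrightarrow> f \<in> Arr C \<and> c \<in> Arr C \<and> Dom C c = Cod C f \<and>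
     zero_mor C (Comp C c f) \<and>
     (\<forall>g \<in> Arr C. Dom C g = Cod C f \<longrightarrow> zero_mor C (Comp C g f) \<longrightarrow>
        (\<exists>!u. u \<in> hom C (Cod C c) (Cod C g) \<and> Comp C u c = g))"

definition is_product :: "('o, 'm) cat \<Rightarrow> 'o \<Rightarrow> 'o \<Rightarrow> 'o \<Rightarrow> 'm \<Rightarrow> 'm \<Rightarrow> bool" where
  "is_product C a b p p1 p2 \<longleftrightarrow> p1 \<in> hom C p a \<and> p2 \<in> hom C p b \<and>
     (\<forall>x f g. f \<in> hom C x a \<longrightarrow> g \<in> hom C x b \<longrightarrow>
        (\<exists>!u. u \<in> hom C x p \<and> Comp C p1 u = f \<and> Comp C p2 u = g))"

definition is_coproduct :: "('o, 'm) cat \<Rightarrow> 'o \<Rightarrow> 'o \<Rightarrow> 'o \<Rightarrow> 'm \<Rightarrow> 'm \<Rightarrow> bool" where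
  "is_coproduct C a b s i1 i2 \<longleftrightarrow> i1 \<in> hom C a s \<and> i2 \<in> hom C b s \<and>
     (\<forall>x f g. f \<in> hom C a x \<longrightarrow> g \<in> hom C b x \<longrightarrow>
        (\<exists>!u. u \<in> hom C s x \<and> Comp C u i1 = f \<and> Comp C u i2 = g))"

definition abelian_cat :: "('o, 'm) cat \<Rightarrow> bool" where
  "abelian_cat C \<longleftrightarrow> category C \<and>
     (\<exists>z. zero_obj C z) \<and>
     (\<forall>a \<in> Obj C. \<forall>b \<in> Obj C. \<exists>p p1 p2. is_product C a b p p1 p2) \<and>
     (\<forall>a \<in> Obj C. \<forall>b \<in> Obj C. \<exists>s i1 i2. is_coproduct C a b s i1 i2) \<and>
     (\<forall>f \<in> Arr C. \<exists>k. is_kernel C f k) \<and>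
     (\<forall>f \<in> Arr C. \<exists>c. is_cokernel C f c) \<and>
     (\<forall>m. mono C m \<longrightarrow> (\<exists>f. is_kernel C f m)) \<and>
     (\<forall>e. epi C e \<longrightarrow> (\<exists>f. is_cokernel C f e))"

definition is_biproduct ::
  "('o, 'm) cat \<Rightarrow> nat \<Rightarrow> (nat \<Rightarrow> 'o) \<Rightarrow> 'o \<Rightarrow> (nat \<Rightarrow> 'm) \<Rightarrow> (nat \<Rightarrow> 'm) \<Rightarrow> bool" where
  "is_biproduct C n N S \<iota> \<pi> \<longleftrightarrow> S \<in> Obj C \<and>
     (\<forall>i \<in> {1..n}. \<iota> i \<in> hom C (N i) S \<and> \<pi> i \<in> hom C S (N i) \<and>
        Comp C (\<pi> i) (\<iota> i) = Id C (N i)) \<and>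
     (\<forall>i \<in> {1..n}. \<forall>j \<in> {1..n}. i \<noteq> j \<longrightarrow> zero_mor C (Comp C (\<pi> j) (\<iota> i))) \<and>
     (\<forall>x f. (\<forall>i \<in> {1..n}. f i \<in> hom C x (N i)) \<longrightarrow>
        (\<exists>!u. u \<in> hom C x S \<and> (\<forall>i \<in> {1..n}. Comp C (\<pi> i) u = f i))) \<and>
     (\<forall>x f. (\<forall>i \<in> {1..n}. f i \<in> hom C (N i) x) \<longrightarrow>
        (\<exists>!u. u \<in> hom C S x \<and> (\<forall>i \<in> {1..n}. Comp C u (\<iota> i) = f i)))"

definition is_section :: "('o, 'm) cat \<Rightarrow> 'm \<Rightarrow> bool" where
  "is_section C f \<longleftrightarrow> f \<in> Arr C \<and>
     (\<exists>f'. f' \<in> hom C (Cod C f) (Dom C f) \<and> Comp C f' f = Id C (Dom C f))"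

definition is_retraction :: "('o, 'm) cat \<Rightarrow> 'm \<Rightarrow> bool" where
  "is_retraction C f \<longleftrightarrow> f \<in> Arr C \<and>
     (\<exists>f'. f' \<in> hom C (Cod C f) (Dom C f) \<and> Comp C f f' = Id C (Cod C f))"

definition fully_invariant :: "('o, 'm) cat \<Rightarrow> 'm \<Rightarrow> bool" where
  "fully_invariant C k \<longleftrightarrow> mono C k \<and>
     (\<forall>h \<in> hom C (Cod C k) (Cod C k).
        \<exists>\<alpha> \<in> hom C (Dom C k) (Dom C k). Comp C h k = Comp C k \<alpha>)"

definition fully_coinvariant :: "('o, 'm) cat \<Rightarrow> 'm \<Rightarrow> bool" where
  "fully_coinvariant C c \<longleftrightarrow> epi C c \<and>
     (\<forall>h \<in> hom C (Dom C c) (Dom C c).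
        \<exists>\<gamma> \<in> hom C (Cod C c) (Cod C c). Comp C c h = Comp C \<gamma> c)"

text \<open>N is strongly M-Rickart: the kernel of every f : M \<rightarrow> N is a fully invariant section.
  (Kernels are unique up to isomorphism; we require it of every kernel.)\<close>
definition strongly_rickart :: "('o, 'm) cat \<Rightarrow> 'o \<Rightarrow> 'o \<Rightarrow> bool" where
  "strongly_rickart C M N \<longleftrightarrow>
     (\<forall>f \<in> hom C M N. \<forall>k. is_kernel C f k \<longrightarrow> is_section C k \<and> fully_invariant C k)"

definition dual_strongly_rickart :: "('o, 'm) cat \<Rightarrow> 'o \<Rightarrow> 'o \<Rightarrow> bool" where
  "dual_strongly_rickart C M N \<longleftrightarrow>
     (\<forall>f \<in> hom C M N. \<forall>c. is_cokernel C f c \<longrightarrow> is_retraction C c \<and> fully_coinvariant C c)"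

end

theory Submission
  imports Defs
begin

text \<open>
  A morphism g : X \<rightarrow> M factors through the kernel of f : M \<rightarrow> N_1 \<oplus> \<dots> \<oplus> N_n iff
  each component \<pi>_i f g vanishes, i.e. iff g factors through every kernel k_i of \<pi>_i f.
  So the kernel of f is the intersection of the kernels k_i, and it suffices to show that a
  finite intersection of fully invariant direct summands is again one. Full invariance passes
  to the intersection directly. For the splitting, let e_i = k_i r_i be the idempotents of the
  summands: by full invariance each e_i preserves every summand, so e_n \<cdots> e_1 lands in every
  k_i, hence equals k r for some r, while it fixes k; as k is monic, r k = 1.
  Part (2) is part (1) in the opposite category.
\<close>

definition factors_through :: "('o, 'm) cat \<Rightarrow> 'm \<Rightarrow> 'm \<Rightarrow> bool" where
  "factors_through C g k \<longleftrightarrow> (\<exists>u \<in> hom C (Dom C g) (Dom C k). Comp C k u = g)"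

primrec comp_chain :: "('o, 'm) cat \<Rightarrow> 'o \<Rightarrow> (nat \<Rightarrow> 'm) \<Rightarrow> nat \<Rightarrow> 'm" where
  "comp_chain C M e 0 = Id C M"
| "comp_chain C M e (Suc m) = Comp C (e (Suc m)) (comp_chain C M e m)"

locale category_structure =
  fixes C :: "('o, 'm) cat"
  assumes category: "category C"
begin

lemma in_homD:
  assumes "f \<in> hom C a b"
  shows "f \<in> Arr C" "Dom C f = a" "Cod C f = b"
  using assms by (simp_all add: hom_def)

lemma in_hom_Dom_Cod: "f \<in> Arr C \<Longrightarrow> f \<in> hom C (Dom C f) (Cod C f)"
  by (simp add: hom_def)

lemma in_hom_Obj: "f \<in> hom C a b \<Longrightarrow> a \<in> Obj C \<and> b \<in> Obj C"
  using category unfolding category_def hom_def by blast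

lemma Id_in_hom: "a \<in> Obj C \<Longrightarrow> Id C a \<in> hom C a a"
  using category unfolding category_def by blast

lemma comp_in_hom: "f \<in> hom C a b \<Longrightarrow> g \<in> hom C b c \<Longrightarrow> Comp C g f \<in> hom C a c"
  using category unfolding category_def by blast

lemma comp_assoc:
  "f \<in> hom C a b \<Longrightarrow> g \<in> hom C b c \<Longrightarrow> h \<in> hom C c d \<Longrightarrow>
   Comp C h (Comp C g f) = Comp C (Comp C h g) f"
  using category unfolding category_def by blast

lemma comp_Id_left: "f \<in> hom C a b \<Longrightarrow> Comp C (Id C b) f = f"
  using category unfolding category_def by blast

lemma comp_Id_right: "f \<in> hom C a b \<Longrightarrow> Comp C f (Id C a) = f"
  using category unfolding category_def by blast

lemma mono_cancel:
  "mono C k \<Longrightarrow> g \<in> hom C x (Dom C k) \<Longrightarrow> h \<in> hom C x (Dom C k) \<Longrightarrow>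
   Comp C k g = Comp C k h \<Longrightarrow> g = h"
  unfolding mono_def by blast

lemma factors_throughI:
  "u \<in> hom C x K \<Longrightarrow> k \<in> hom C K M \<Longrightarrow> factors_through C (Comp C k u) k"
  unfolding factors_through_def using comp_in_hom in_homD by metis

lemma factors_throughE:
  assumes "factors_through C g k" "g \<in> hom C x M" "k \<in> hom C K M"
  obtains u where "u \<in> hom C x K" "g = Comp C k u"
  using assms unfolding factors_through_def by (metis in_homD(2))

lemma factors_through_self: "k \<in> hom C K M \<Longrightarrow> factors_through C k k"
  using factors_throughI[of "Id C K" K K k M] in_hom_Obj Id_in_hom comp_Id_right by metis

lemma factors_through_comp_right:
  assumes "factors_through C g k" "g \<in> hom C a M" "k \<in> hom C K M" "h \<in> hom C x a"
  shows "factors_through C (Comp C g h) k"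
proof -
  obtain u where u: "u \<in> hom C a K" "g = Comp C k u"
    using assms(1-3) by (rule factors_throughE)
  have "Comp C g h = Comp C k (Comp C u h)"
    using u comp_assoc[OF assms(4) u(1) assms(3)] by simp
  then show ?thesis
    using factors_throughI[OF comp_in_hom[OF assms(4) u(1)] assms(3)] by simp
qed

lemma fully_invariant_factors_through_comp_left:
  assumes k: "fully_invariant C k" "k \<in> hom C K M"
    and h: "h \<in> hom C M M" and g: "g \<in> hom C x M" "factors_through C g k"
  shows "factors_through C (Comp C h g) k"
proof -
  obtain u where u: "u \<in> hom C x K" "g = Comp C k u"
    using g k(2) by (auto elim: factors_throughE)
  obtain \<alpha> where \<alpha>: "\<alpha> \<in> hom C K K" "Comp C h k = Comp C k \<alpha>"
    using k h unfolding fully_invariant_def by (auto simp: in_homD)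
  have "Comp C h g = Comp C (Comp C k \<alpha>) u"
    using u \<alpha> comp_assoc[OF u(1) k(2) h] by simp
  also have "\<dots> = Comp C k (Comp C \<alpha> u)"
    using comp_assoc[OF u(1) \<alpha>(1) k(2)] by simp
  finally show ?thesis
    using factors_throughI[OF comp_in_hom[OF u(1) \<alpha>(1)] k(2)] by simp
qed

lemma retraction_comp_fixes_factor:
  assumes k: "k \<in> hom C K M" and r: "r \<in> hom C M K" "Comp C r k = Id C K"
    and g: "g \<in> hom C x M" "factors_through C g k"
  shows "Comp C (Comp C k r) g = g"
proof -
  obtain u where u: "u \<in> hom C x K" "g = Comp C k u"
    using g k by (auto elim: factors_throughE)
  have rk: "Comp C r k \<in> hom C K K"
    using comp_in_hom[OF k r(1)] .
  have "Comp C (Comp C k r) g = Comp C (Comp C (Comp C k r) k) u"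
    using u comp_assoc[OF u(1) k comp_in_hom[OF r(1) k]] by simp
  also have "\<dots> = Comp C (Comp C k (Comp C r k)) u"
    using comp_assoc[OF k r(1) k] by simp
  also have "\<dots> = Comp C k (Comp C (Comp C r k) u)"
    using comp_assoc[OF u(1) rk k] by simp
  also have "\<dots> = g"
    using u r(2) comp_Id_left[OF u(1)] by simp
  finally show ?thesis .
qed

subsection \<open>Finite intersections of fully invariant direct summands\<close>

lemma comp_chain_in_hom:
  assumes "M \<in> Obj C" "\<forall>i \<in> {1..m}. e i \<in> hom C M M"
  shows "comp_chain C M e m \<in> hom C M M"
  using assms(2) by (induction m) (auto intro: comp_in_hom Id_in_hom[OF assms(1)])

lemma comp_chain_fixes:
  assumes "M \<in> Obj C" "g \<in> hom C x M"
    and "\<forall>i \<in> {1..m}. e i \<in> hom C M M \<and> Comp C (e i) g = g"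
  shows "Comp C (comp_chain C M e m) g = g"
  using assms(3)
proof (induction m)
  case 0
  then show ?case using comp_Id_left[OF assms(2)] by simp
next
  case (Suc m)
  have e: "e (Suc m) \<in> hom C M M" "Comp C (e (Suc m)) g = g"
    using Suc.prems by auto
  have P: "comp_chain C M e m \<in> hom C M M"
    using comp_chain_in_hom[OF assms(1)] Suc.prems by simp
  have "Comp C (comp_chain C M e (Suc m)) g = Comp C (e (Suc m)) (Comp C (comp_chain C M e m) g)"
    using comp_assoc[OF assms(2) P e(1)] by simp
  then show ?case using Suc e by simp
qed

lemma comp_chain_factors_through:
  assumes M: "M \<in> Obj C"
    and k: "\<forall>i \<in> {1..m}. fully_invariant C (k i) \<and> k i \<in> hom C (Dom C (k i)) M"
    and e: "\<forall>i \<in> {1..m}. e i \<in> hom C M M \<and> factors_through C (e i) (k i)"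
    and j: "j \<in> {1..m}"
  shows "factors_through C (comp_chain C M e m) (k j)"
  using k e j
proof (induction m)
  case 0
  then show ?case by simp
next
  case (Suc m)
  have e: "e (Suc m) \<in> hom C M M" "factors_through C (e (Suc m)) (k (Suc m))"
    and kS: "k (Suc m) \<in> hom C (Dom C (k (Suc m))) M"
    using Suc.prems by auto
  have P: "comp_chain C M e m \<in> hom C M M"
    using comp_chain_in_hom[OF M] Suc.prems by simp
  show ?case
  proof (cases "j = Suc m")
    case True
    then show ?thesis
      using factors_through_comp_right[OF e(2) e(1) kS P] by simp
  next
    case False
    then have "factors_through C (comp_chain C M e m) (k j)"
      using Suc by simp
    moreover have "fully_invariant C (k j)" "k j \<in> hom C (Dom C (k j)) M"
      using Suc.prems by auto
    ultimately show ?thesis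
      using fully_invariant_factors_through_comp_left[OF _ _ e(1) P] by simp
  qed
qed

lemma fully_invariant_Inter:
  fixes ks :: "nat \<Rightarrow> 'm" and n :: nat
  assumes k: "mono C k" "k \<in> hom C K M"
    and ks: "\<forall>i \<in> {1..n}. fully_invariant C (ks i) \<and> ks i \<in> hom C (Dom C (ks i)) M"
    and Inter: "\<And>x g. g \<in> hom C x M \<Longrightarrow>
      factors_through C g k \<longleftrightarrow> (\<forall>i \<in> {1..n}. factors_through C g (ks i))"
  shows "fully_invariant C k"
  unfolding fully_invariant_def
proof (intro conjI ballI)
  fix h assume "h \<in> hom C (Cod C k) (Cod C k)"
  then have h: "h \<in> hom C M M"
    using in_homD(3)[OF k(2)] by simp
  have hk: "Comp C h k \<in> hom C K M"
    using comp_in_hom[OF k(2) h] .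
  have "\<forall>i \<in> {1..n}. factors_through C (Comp C h k) (ks i)"
    using fully_invariant_factors_through_comp_left[OF _ _ h k(2)] ks Inter[OF k(2)]
      factors_through_self[OF k(2)] by blast
  then have "factors_through C (Comp C h k) k"
    using Inter[OF hk] by blast
  then obtain \<alpha> where "\<alpha> \<in> hom C K K" "Comp C h k = Comp C k \<alpha>"
    using hk k(2) by (rule factors_throughE)
  then show "\<exists>\<alpha> \<in> hom C (Dom C k) (Dom C k). Comp C h k = Comp C k \<alpha>"
    using in_homD(2)[OF k(2)] by auto
qed (rule k(1))

lemma is_section_Inter:
  fixes ks :: "nat \<Rightarrow> 'm" and n :: nat
  assumes M: "M \<in> Obj C" and k: "mono C k" "k \<in> hom C K M"
    and ks: "\<forall>i \<in> {1..n}. is_section C (ks i) \<and> fully_invariant C (ks i) \<and>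
      ks i \<in> hom C (Dom C (ks i)) M"
    and Inter: "\<And>x g. g \<in> hom C x M \<Longrightarrow>
      factors_through C g k \<longleftrightarrow> (\<forall>i \<in> {1..n}. factors_through C g (ks i))"
  shows "is_section C k"
proof -
  obtain rs where rs: "\<forall>i \<in> {1..n}. rs i \<in> hom C M (Dom C (ks i)) \<and>
      Comp C (rs i) (ks i) = Id C (Dom C (ks i))"
    using ks bchoice[of "{1..n}"
        "\<lambda>i r. r \<in> hom C M (Dom C (ks i)) \<and> Comp C r (ks i) = Id C (Dom C (ks i))"]
    unfolding is_section_def by (metis in_homD(3))
  define e where "e i = Comp C (ks i) (rs i)" for i :: nat
  have e: "\<forall>i \<in> {1..n}. e i \<in> hom C M M \<and> factors_through C (e i) (ks i)"
    unfolding e_def using rs ks comp_in_hom factors_throughI by blast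
  have P: "comp_chain C M e n \<in> hom C M M"
    using comp_chain_in_hom[OF M] e by blast
  have "\<forall>i \<in> {1..n}. Comp C (e i) k = k"
    unfolding e_def using retraction_comp_fixes_factor[OF _ _ _ k(2)] ks rs Inter[OF k(2)]
      factors_through_self[OF k(2)] by blast
  then have P_k: "Comp C (comp_chain C M e n) k = k"
    using comp_chain_fixes[OF M k(2)] e by blast
  have "\<forall>j \<in> {1..n}. factors_through C (comp_chain C M e n) (ks j)"
    using comp_chain_factors_through[OF M _ e] ks by blast
  then have "factors_through C (comp_chain C M e n) k"
    using Inter[OF P] by blast
  then obtain r where r: "r \<in> hom C M K" "comp_chain C M e n = Comp C k r"
    using P k(2) by (rule factors_throughE)
  have K: "K \<in> Obj C"
    using in_hom_Obj[OF k(2)] by blast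
  have "Comp C k (Comp C r k) = Comp C k (Id C K)"
    using P_k r comp_assoc[OF k(2) r(1) k(2)] comp_Id_right[OF k(2)] by simp
  then have "Comp C r k = Id C K"
    using mono_cancel[OF k(1)] comp_in_hom[OF k(2) r(1)] Id_in_hom[OF K] in_homD(2)[OF k(2)]
    by simp
  then show ?thesis
    unfolding is_section_def using r(1) k(2) by (auto simp: in_homD)
qed

lemma zero_morI:
  assumes "zero_obj C z" "g \<in> hom C a z" "h \<in> hom C z b"
  shows "zero_mor C (Comp C h g)"
proof -
  have "Comp C h g \<in> hom C a b"
    using comp_in_hom[OF assms(2,3)] .
  then show ?thesis
    unfolding zero_mor_def using assms by (auto simp: in_homD)
qed

lemma zero_morE:
  assumes "zero_mor C f" "f \<in> hom C a b"
  obtains z g h where "zero_obj C z" "g \<in> hom C a z" "h \<in> hom C z b" "f = Comp C h g"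
proof -
  obtain z g h where "zero_obj C z" "g \<in> hom C (Dom C f) z" "h \<in> hom C z (Cod C f)" "f = Comp C h g"
    using assms(1) unfolding zero_mor_def by blast
  then show thesis
    using that in_homD[OF assms(2)] by simp
qed

lemma zero_mor_comp_left_zero:
  assumes "zero_mor C g" "f \<in> hom C a b" "g \<in> hom C b c"
  shows "zero_mor C (Comp C g f)"
proof -
  obtain z g0 h0 where z: "zero_obj C z" "g0 \<in> hom C b z" "h0 \<in> hom C z c" "g = Comp C h0 g0"
    using assms(1,3) by (rule zero_morE)
  then have "Comp C g f = Comp C h0 (Comp C g0 f)"
    using comp_assoc[OF assms(2)] by simp
  then show ?thesis
    using zero_morI[OF z(1) comp_in_hom[OF assms(2) z(2)] z(3)] by simp
qed

lemma zero_mor_comp_right_zero: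
  assumes "zero_mor C f" "f \<in> hom C a b" "g \<in> hom C b c"
  shows "zero_mor C (Comp C g f)"
proof -
  obtain z g0 h0 where z: "zero_obj C z" "g0 \<in> hom C a z" "h0 \<in> hom C z b" "f = Comp C h0 g0"
    using assms(1,2) by (rule zero_morE)
  then have "Comp C g f = Comp C (Comp C g h0) g0"
    using comp_assoc[OF z(2) z(3) assms(3)] by simp
  then show ?thesis
    using zero_morI[OF z(1) z(2) comp_in_hom[OF z(3) assms(3)]] by simp
qed

lemma zero_obj_ex1_hom:
  assumes "zero_obj C z" "b \<in> Obj C"
  shows "\<exists>!f. f \<in> hom C z b" "\<exists>!f. f \<in> hom C b z"
  using assms unfolding zero_obj_def by simp_all

lemma zero_mor_unique:
  assumes "zero_mor C f" "zero_mor C g" "f \<in> hom C a b" "g \<in> hom C a b"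
  shows "f = g"
proof -
  obtain z f0 f1 where f: "zero_obj C z" "f0 \<in> hom C a z" "f1 \<in> hom C z b" "f = Comp C f1 f0"
    using assms(1,3) by (rule zero_morE)
  obtain z' g0 g1 where g: "zero_obj C z'" "g0 \<in> hom C a z'" "g1 \<in> hom C z' b" "g = Comp C g1 g0"
    using assms(2,4) by (rule zero_morE)
  obtain t where t: "t \<in> hom C z z'"
    using zero_obj_ex1_hom(1)[OF f(1)] in_hom_Obj[OF g(2)] by blast
  have "f1 = Comp C g1 t"
    using zero_obj_ex1_hom(1)[OF f(1)] in_hom_Obj[OF f(3)] f(3) comp_in_hom[OF t g(3)] by blast
  moreover have "g0 = Comp C t f0"
    using zero_obj_ex1_hom(2)[OF g(1)] in_hom_Obj[OF g(2)] g(2) comp_in_hom[OF f(2) t] by blast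
  ultimately show ?thesis
    using f(4) g(4) comp_assoc[OF f(2) t g(3)] by simp
qed

lemma zero_mor_comp_split_mono_iff:
  assumes m: "m \<in> hom C b c" and p: "p \<in> hom C c b" "Comp C p m = Id C b"
    and g: "g \<in> hom C x b"
  shows "zero_mor C (Comp C m g) \<longleftrightarrow> zero_mor C g"
proof
  assume "zero_mor C (Comp C m g)"
  then have "zero_mor C (Comp C p (Comp C m g))"
    using zero_mor_comp_right_zero[OF _ comp_in_hom[OF g m] p(1)] by simp
  then show "zero_mor C g"
    using comp_assoc[OF g m p(1)] p(2) comp_Id_left[OF g] by simp
qed (rule zero_mor_comp_right_zero[OF _ g m])

lemma kernel_in_hom: "is_kernel C f k \<Longrightarrow> f \<in> hom C a b \<Longrightarrow> k \<in> hom C (Dom C k) a"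
  unfolding is_kernel_def hom_def by auto

lemma kernel_zero_mor: "is_kernel C f k \<Longrightarrow> zero_mor C (Comp C f k)"
  unfolding is_kernel_def by blast

lemma kernel_ex1_factor:
  assumes k: "is_kernel C f k" and f: "f \<in> hom C a b" and g: "g \<in> hom C x a"
    and z: "zero_mor C (Comp C f g)"
  shows "\<exists>!u. u \<in> hom C x (Dom C k) \<and> Comp C k u = g"
proof -
  have "\<forall>g \<in> Arr C. Cod C g = Dom C f \<longrightarrow> zero_mor C (Comp C f g) \<longrightarrow>
      (\<exists>!u. u \<in> hom C (Dom C g) (Dom C k) \<and> Comp C k u = g)"
    using k unfolding is_kernel_def by blast
  from this[rule_format, OF in_homD(1)[OF g] _ z] show ?thesis
    using in_homD[OF g] in_homD[OF f] by simp
qed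

lemma kernel_factors_through_iff:
  assumes k: "is_kernel C f k" and f: "f \<in> hom C a b" and g: "g \<in> hom C x a"
  shows "factors_through C g k \<longleftrightarrow> zero_mor C (Comp C f g)"
proof
  have kh: "k \<in> hom C (Dom C k) a"
    using kernel_in_hom[OF k f] .
  assume "factors_through C g k"
  then obtain u where u: "u \<in> hom C x (Dom C k)" "g = Comp C k u"
    using g kh by (rule factors_throughE)
  have "zero_mor C (Comp C (Comp C f k) u)"
    using zero_mor_comp_left_zero[OF kernel_zero_mor[OF k] u(1) comp_in_hom[OF kh f]] .
  then show "zero_mor C (Comp C f g)"
    using u comp_assoc[OF u(1) kh f] by simp
next
  assume "zero_mor C (Comp C f g)"
  then show "factors_through C g k"
    using kernel_ex1_factor[OF k f g] in_homD(2)[OF g] unfolding factors_through_def by blast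
qed

lemma kernel_mono:
  assumes k: "is_kernel C f k" and f: "f \<in> hom C a b"
  shows "mono C k"
  unfolding mono_def
proof (intro conjI allI impI)
  have kh: "k \<in> hom C (Dom C k) a"
    using kernel_in_hom[OF k f] .
  then show "k \<in> Arr C"
    by (rule in_homD)
  fix x g h
  assume g: "g \<in> hom C x (Dom C k)" and h: "h \<in> hom C x (Dom C k)"
    and eq: "Comp C k g = Comp C k h"
  have kg: "Comp C k g \<in> hom C x a"
    using comp_in_hom[OF g kh] .
  have "zero_mor C (Comp C f (Comp C k g))"
    using kernel_factors_through_iff[OF k f kg] factors_throughI[OF g kh] by simp
  then have "\<exists>!u. u \<in> hom C x (Dom C k) \<and> Comp C k u = Comp C k g"
    by (rule kernel_ex1_factor[OF k f kg])
  then show "g = h"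
    using g h eq by (metis (no_types, lifting))
qed

lemma kernel_comp_split_mono:
  assumes k: "is_kernel C f k" and f: "f \<in> hom C a b"
    and m: "m \<in> hom C b c" and p: "p \<in> hom C c b" "Comp C p m = Id C b"
  shows "is_kernel C (Comp C m f) k"
proof -
  have mf: "Comp C m f \<in> hom C a c"
    using comp_in_hom[OF f m] .
  have zero_iff: "zero_mor C (Comp C (Comp C m f) g) \<longleftrightarrow> zero_mor C (Comp C f g)"
    if "g \<in> hom C x a" for g x
    using zero_mor_comp_split_mono_iff[OF m p comp_in_hom[OF that f]] comp_assoc[OF that f m]
    by simp
  have kh: "k \<in> hom C (Dom C k) a"
    using kernel_in_hom[OF k f] .
  show ?thesis
    unfolding is_kernel_def
  proof (intro conjI ballI impI)
    show "Comp C m f \<in> Arr C" "k \<in> Arr C"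
      using mf kh by (simp_all add: in_homD)
    show "Cod C k = Dom C (Comp C m f)"
      using kh mf by (simp add: in_homD)
    show "zero_mor C (Comp C (Comp C m f) k)"
      using zero_iff[OF kh] kernel_zero_mor[OF k] by simp
    fix g
    assume "g \<in> Arr C" "Cod C g = Dom C (Comp C m f)"
      and z: "zero_mor C (Comp C (Comp C m f) g)"
    then have g: "g \<in> hom C (Dom C g) a"
      using in_homD(2)[OF mf] by (simp add: hom_def)
    show "\<exists>!u. u \<in> hom C (Dom C g) (Dom C k) \<and> Comp C k u = g"
      using kernel_ex1_factor[OF k f g] zero_iff[OF g] z by simp
  qed
qed

subsection \<open>Biproducts\<close>

lemma biproduct_in_homs:
  assumes "is_biproduct C n N S \<iota> \<pi>" "i \<in> {1..n}"
  shows "\<iota> i \<in> hom C (N i) S" "\<pi> i \<in> hom C S (N i)" "Comp C (\<pi> i) (\<iota> i) = Id C (N i)"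
  using assms unfolding is_biproduct_def by auto

lemma biproduct_eqI:
  assumes b: "is_biproduct C n N S \<iota> \<pi>" and u: "u \<in> hom C x S" and v: "v \<in> hom C x S"
    and eq: "\<forall>i \<in> {1..n}. Comp C (\<pi> i) u = Comp C (\<pi> i) v"
  shows "u = v"
proof -
  have "\<forall>x f. (\<forall>i \<in> {1..n}. f i \<in> hom C x (N i)) \<longrightarrow>
      (\<exists>!w. w \<in> hom C x S \<and> (\<forall>i \<in> {1..n}. Comp C (\<pi> i) w = f i))"
    using b unfolding is_biproduct_def by (elim conjE)
  moreover have "\<forall>i \<in> {1..n}. Comp C (\<pi> i) v \<in> hom C x (N i)"
    using comp_in_hom[OF v] biproduct_in_homs(2)[OF b] by blast
  ultimately have "\<exists>!w. w \<in> hom C x S \<and> (\<forall>i \<in> {1..n}. Comp C (\<pi> i) w = Comp C (\<pi> i) v)"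
    by simp
  then show ?thesis
    using u v eq by (metis (no_types, lifting))
qed

lemma strongly_rickart_biproduct_component:
  assumes sr: "strongly_rickart C M S" and b: "is_biproduct C n N S \<iota> \<pi>" and i: "i \<in> {1..n}"
  shows "strongly_rickart C M (N i)"
  unfolding strongly_rickart_def
proof (intro ballI allI impI)
  fix f k assume f: "f \<in> hom C M (N i)" and k: "is_kernel C f k"
  have "is_kernel C (Comp C (\<iota> i) f) k"
    using kernel_comp_split_mono[OF k f] biproduct_in_homs[OF b i] by blast
  moreover have "Comp C (\<iota> i) f \<in> hom C M S"
    using comp_in_hom[OF f biproduct_in_homs(1)[OF b i]] .
  ultimately show "is_section C k \<and> fully_invariant C k"
    using sr unfolding strongly_rickart_def by blast
qed

end

locale category_with_kernels = category_structure +
  assumes zero_obj_exists: "\<exists>z. zero_obj C z"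
    and kernel_exists: "f \<in> Arr C \<Longrightarrow> \<exists>k. is_kernel C f k"
begin

lemma zero_mor_exists:
  assumes "a \<in> Obj C" "b \<in> Obj C"
  obtains f where "f \<in> hom C a b" "zero_mor C f"
proof -
  obtain z where z: "zero_obj C z"
    using zero_obj_exists ..
  obtain g h where "g \<in> hom C a z" "h \<in> hom C z b"
    using zero_obj_ex1_hom[OF z assms(1)] zero_obj_ex1_hom[OF z assms(2)] by blast
  then show thesis
    using that zero_morI[OF z] comp_in_hom by blast
qed

lemma biproduct_zero_mor_iff:
  assumes b: "is_biproduct C n N S \<iota> \<pi>" and g: "g \<in> hom C x S"
  shows "zero_mor C g \<longleftrightarrow> (\<forall>i \<in> {1..n}. zero_mor C (Comp C (\<pi> i) g))"
proof
  assume "zero_mor C g"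
  then show "\<forall>i \<in> {1..n}. zero_mor C (Comp C (\<pi> i) g)"
    using zero_mor_comp_right_zero[OF _ g] biproduct_in_homs(2)[OF b] by blast
next
  assume components: "\<forall>i \<in> {1..n}. zero_mor C (Comp C (\<pi> i) g)"
  obtain z where z: "z \<in> hom C x S" "zero_mor C z"
    using zero_mor_exists in_hom_Obj[OF g] by metis
  have "\<forall>i \<in> {1..n}. Comp C (\<pi> i) z = Comp C (\<pi> i) g"
  proof
    fix i assume i: "i \<in> {1..n}"
    have \<pi>: "\<pi> i \<in> hom C S (N i)"
      using biproduct_in_homs(2)[OF b i] .
    show "Comp C (\<pi> i) z = Comp C (\<pi> i) g"
      using zero_mor_unique[OF zero_mor_comp_right_zero[OF z(2) z(1) \<pi>]] components i
        comp_in_hom[OF z(1) \<pi>] comp_in_hom[OF g \<pi>] by blast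
  qed
  then show "zero_mor C g"
    using biproduct_eqI[OF b z(1) g] z(2) by simp
qed

lemma strongly_rickart_biproduct:
  assumes M: "M \<in> Obj C" and b: "is_biproduct C n N S \<iota> \<pi>"
    and sr: "\<forall>i \<in> {1..n}. strongly_rickart C M (N i)"
  shows "strongly_rickart C M S"
  unfolding strongly_rickart_def
proof (intro ballI allI impI)
  fix f k assume f: "f \<in> hom C M S" and k: "is_kernel C f k"
  have \<pi>f: "\<forall>i \<in> {1..n}. Comp C (\<pi> i) f \<in> hom C M (N i)"
    using comp_in_hom[OF f] biproduct_in_homs(2)[OF b] by blast
  obtain ks where ks: "\<forall>i \<in> {1..n}. is_kernel C (Comp C (\<pi> i) f) (ks i)"
    using bchoice[of "{1..n}" "\<lambda>i k. is_kernel C (Comp C (\<pi> i) f) k"] kernel_exists \<pi>f in_homD(1)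
    by metis
  have summands: "\<forall>i \<in> {1..n}. is_section C (ks i) \<and> fully_invariant C (ks i) \<and>
      ks i \<in> hom C (Dom C (ks i)) M"
    using sr \<pi>f ks kernel_in_hom unfolding strongly_rickart_def by blast
  have "factors_through C g k \<longleftrightarrow> (\<forall>i \<in> {1..n}. factors_through C g (ks i))"
    if g: "g \<in> hom C x M" for x g
  proof -
    have "factors_through C g k \<longleftrightarrow> (\<forall>i \<in> {1..n}. zero_mor C (Comp C (\<pi> i) (Comp C f g)))"
      using kernel_factors_through_iff[OF k f g] biproduct_zero_mor_iff[OF b comp_in_hom[OF g f]]
      by simp
    also have "\<dots> \<longleftrightarrow> (\<forall>i \<in> {1..n}. zero_mor C (Comp C (Comp C (\<pi> i) f) g))"
      using comp_assoc[OF g f biproduct_in_homs(2)[OF b]] by simp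
    also have "\<dots> \<longleftrightarrow> (\<forall>i \<in> {1..n}. factors_through C g (ks i))"
      using kernel_factors_through_iff[OF _ _ g] ks \<pi>f by blast
    finally show ?thesis .
  qed
  then show "is_section C k \<and> fully_invariant C k"
    using is_section_Inter[OF M kernel_mono[OF k f] kernel_in_hom[OF k f] summands]
      fully_invariant_Inter[OF kernel_mono[OF k f] kernel_in_hom[OF k f]] summands
    by blast
qed

lemma strongly_rickart_biproduct_iff:
  assumes "M \<in> Obj C" "is_biproduct C n N S \<iota> \<pi>"
  shows "strongly_rickart C M S \<longleftrightarrow> (\<forall>i \<in> {1..n}. strongly_rickart C M (N i))"
  using strongly_rickart_biproduct[OF assms] strongly_rickart_biproduct_component[OF _ assms(2)]
  by blast

end

subsection \<open>Duality\<close>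

definition op_cat :: "('o, 'm) cat \<Rightarrow> ('o, 'm) cat" where
  "op_cat C = C\<lparr>Dom := Cod C, Cod := Dom C, Comp := (\<lambda>g f. Comp C f g)\<rparr>"

lemma op_cat_simps [simp]:
  "Obj (op_cat C) = Obj C" "Arr (op_cat C) = Arr C" "Dom (op_cat C) = Cod C"
  "Cod (op_cat C) = Dom C" "Comp (op_cat C) g f = Comp C f g" "Id (op_cat C) = Id C"
  by (simp_all add: op_cat_def)

lemma hom_op_cat [simp]: "hom (op_cat C) a b = hom C b a"
  by (auto simp: hom_def)

lemma category_op_cat: "category C \<Longrightarrow> category (op_cat C)"
  unfolding category_def by (simp add: hom_def)

lemma mono_op_cat [simp]: "mono (op_cat C) f = epi C f"
  unfolding mono_def epi_def by simp

lemma zero_obj_op_cat [simp]: "zero_obj (op_cat C) z = zero_obj C z"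
  unfolding zero_obj_def by auto

lemma zero_mor_op_cat [simp]: "zero_mor (op_cat C) f = zero_mor C f"
  unfolding zero_mor_def by auto

lemma is_kernel_op_cat [simp]: "is_kernel (op_cat C) f k = is_cokernel C f k"
  unfolding is_kernel_def is_cokernel_def by simp

lemma is_section_op_cat [simp]: "is_section (op_cat C) f = is_retraction C f"
  unfolding is_section_def is_retraction_def by simp

lemma fully_invariant_op_cat [simp]: "fully_invariant (op_cat C) f = fully_coinvariant C f"
  unfolding fully_invariant_def fully_coinvariant_def by simp

lemma strongly_rickart_op_cat [simp]:
  "strongly_rickart (op_cat C) N M = dual_strongly_rickart C M N"
  unfolding strongly_rickart_def dual_strongly_rickart_def by simp

lemma is_biproduct_op_cat: "is_biproduct C n N S \<iota> \<pi> \<Longrightarrow> is_biproduct (op_cat C) n N S \<pi> \<iota>"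
  unfolding is_biproduct_def by simp

lemma abelian_cat_category_with_kernels:
  assumes "abelian_cat C"
  shows "category_with_kernels C" "category_with_kernels (op_cat C)"
  using assms category_op_cat
  unfolding abelian_cat_def category_with_kernels_def category_with_kernels_axioms_def
    category_structure_def
  by auto

theorem theorem3p1:
  fixes C :: "('o, 'm) cat"
  assumes "abelian_cat C"
  shows
    "(\<forall>(n::nat) M N S \<iota> \<pi>. M \<in> Obj C \<longrightarrow> (\<forall>i \<in> {1..n}. N i \<in> Obj C) \<longrightarrow>
        is_biproduct C n N S \<iota> \<pi> \<longrightarrow>
        (strongly_rickart C M S \<longleftrightarrow> (\<forall>i \<in> {1..n}. strongly_rickart C M (N i))))
     \<and>
     (\<forall>(n::nat) Ms N S \<iota> \<pi>. N \<in> Obj C \<longrightarrow> (\<forall>i \<in> {1..n}. Ms i \<in> Obj C) \<longrightarrow>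
        is_biproduct C n Ms S \<iota> \<pi> \<longrightarrow>
        (dual_strongly_rickart C S N \<longleftrightarrow> (\<forall>i \<in> {1..n}. dual_strongly_rickart C (Ms i) N)))"
proof -
  interpret C: category_with_kernels C
    using abelian_cat_category_with_kernels(1)[OF assms] .
  interpret op: category_with_kernels "op_cat C"
    using abelian_cat_category_with_kernels(2)[OF assms] .
  show ?thesis
    using C.strongly_rickart_biproduct_iff
      op.strongly_rickart_biproduct_iff[OF _ is_biproduct_op_cat]
    by simp
qed

end
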